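(* Let $F=\{T_1,\dots,T_n\}$ be a finite family of reduction operators relative to a well-ordered set $(G,<)$. Define $B_1=\emptyset$ and, for $2\le i\le n$, \[B_i=B_{i-1}\cup\{s_{i,g_0}\mid g_0\in\mathrm{red}(U_{i-1}\vee T_i)\},\] with $U_{i-1}$ and $s_{i,g_0}$ as defined in the context. Then $B_n$ is a basis of $\mathrm{syz}(F)$.
   Context: Let $\mathbb{K}$ be a field, $(G,<)$ a well-ordered set and $\mathbb{K}G$ the vector space with basis $G$. For $v\neq 0$, $\mathrm{lt}(v)$ is the greatest element of $G$ appearing with nonzero coefficient in $v$. Extend $<$ to $\mathbb{K}G$: $u<v$ if $u=0$ and $v\neq0$, or if $\mathrm{lt}(u)<\mathrm{lt}(v)$; $u\le v$ means $u<v$ or $u=v$. A reduction operator is an idempotent linear endomorphism $T$ of $\mathbb{K}G$ with $T(g)\le g$ for all $g\in G$; $\mathrm{red}(T)=\{g\in G\mid T(g)\neq g\}$. The elements $g-T(g)$, $g\in\mathrm{red}(T)$, form a basis of $\ker T$; the expression of $v\in\ker T$ in this basis is its $T$-decomposition. For every subspace $V$ there is a unique reduction operator $\ker^{-1}(V)$ with kernel $V$; $T\wedge T'=\ker^{-1}(\ker T+\ker T')$, $T\vee T'=\ker^{-1}(\ker T\cap\ker T')$, and for a finite family $\wedge\{T_1,\dots,T_k\}=T_1\wedge\dots\wedge T_k=\ker^{-1}(\sum\ker T_j)$. For a finite family $F'=\{T_1,\dots,T_k\}$: $\mathbf{ker}(F')=\ker T_1\times\dots\times\ker T_k$; $\pi_{F'}(v_1,\dots,v_k)=v_1+\dots+v_k\in\ker(\wedge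 F')$; $\mathrm{syz}(F')=\ker\pi_{F'}$. For $1\le j\le k$ and $g\in\mathrm{red}(T_j)$, $e_{j,g}$ is the tuple with $g-T_j(g)$ at position $j$ and $0$ elsewhere; these form a basis of $\mathbf{ker}(F')$, well-ordered by $e_{j,g}\sqsubset e_{j',g'}$ iff $j<j'$, or $j=j'$ and $g<g'$. The leading term of a nonzero element of $\mathbf{ker}(F')$ is the $\sqsubset$-greatest $e_{j,g}$ in its expansion, and $\mathrm{lt}(\mathrm{syz}(F'))$ is the set of leading terms of nonzero syzygies. Every $v\in\ker(\wedge F')$ has a unique expression $v=\sum\lambda_{j,g}(g-T_j(g))$ with sum over pairs with $g\in\mathrm{red}(T_j)$ and $e_{j,g}\notin\mathrm{lt}(\mathrm{syz}(F'))$: its canonical decomposition with respect to $F'$. For $2\le i\le n$ let $U_{i-1}=T_1\wedge\dots\wedge T_{i-1}$. For $g_0\in\mathrm{red}(U_{i-1}\vee T_i)$ let $v_{i,g_0}=g_0-(U_{i-1}\vee T_i)(g_0)$, which lies in $\ker U_{i-1}\cap\ker T_i$. Let $\sum_{j,g'}\lambda_{j,g'}(g'-T_j(g'))$ be its canonical decomposition with respect to $\{T_1,\dots,T_{i-1}\}$ and $\sum_g\lambda_g(g-T_i(g))$ its $T_i$-decomposition, and set $s_{i,g_0}=\sum_g\lambda_g e_{i,g}-\sum_{j,g'}\lambda_{j,g'}e_{j,g'}\in\mathbf{ker}(F)$, where the $e_{j,g}$ are viewed in $\mathbf{ker}(F)=\ker T_1\times\dots\times\ker T_n$. *)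

theory Defs
  imports "HOL-Library.Poly_Mapping" "HOL-Library.Function_Algebras" HOL.Modules
begin

text \<open>The vector space KG is modelled as the type of finitely supported functions
  finitely supported functions; the basis element g is rdelta g.\<close>

definition smul :: "'k::field \<Rightarrow> ('g \<Rightarrow>\<^sub>0 'k) \<Rightarrow> ('g \<Rightarrow>\<^sub>0 'k)" where
  "smul c v = Poly_Mapping.map (\<lambda>x. c * x) v"

definition rdelta :: "'g \<Rightarrow> ('g \<Rightarrow>\<^sub>0 'k::field)" where
  "rdelta g = Poly_Mapping.single g 1"

definition klinear :: "(('g \<Rightarrow>\<^sub>0 'k::field) \<Rightarrow> ('g \<Rightarrow>\<^sub>0 'k)) \<Rightarrow> bool" where
  "klinear T \<longleftrightarrow> (\<forall>u v. T (u + v) = T u + T v) \<and> (\<forall>c v. T (smul c v) = smul c (T v))"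

definition rlt :: "('g::wellorder \<Rightarrow>\<^sub>0 'k::field) \<Rightarrow> 'g" where
  "rlt v = Max (Poly_Mapping.keys v)"

definition vless :: "('g::wellorder \<Rightarrow>\<^sub>0 'k::field) \<Rightarrow> ('g \<Rightarrow>\<^sub>0 'k) \<Rightarrow> bool" where
  "vless u v \<longleftrightarrow> (u = 0 \<and> v \<noteq> 0) \<or> (u \<noteq> 0 \<and> v \<noteq> 0 \<and> rlt u < rlt v)"

definition vle :: "('g::wellorder \<Rightarrow>\<^sub>0 'k::field) \<Rightarrow> ('g \<Rightarrow>\<^sub>0 'k) \<Rightarrow> bool" where
  "vle u v \<longleftrightarrow> vless u v \<or> u = v"

definition reduction_op :: "(('g::wellorder \<Rightarrow>\<^sub>0 'k::field) \<Rightarrow> ('g \<Rightarrow>\<^sub>0 'k)) \<Rightarrow> bool" where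
  "reduction_op T \<longleftrightarrow> klinear T \<and> (\<forall>v. T (T v) = T v) \<and> (\<forall>g. vle (T (rdelta g)) (rdelta g))"

definition red :: "(('g::wellorder \<Rightarrow>\<^sub>0 'k::field) \<Rightarrow> ('g \<Rightarrow>\<^sub>0 'k)) \<Rightarrow> 'g set" where
  "red T = {g. T (rdelta g) \<noteq> rdelta g}"

definition kerR :: "(('g \<Rightarrow>\<^sub>0 'k::field) \<Rightarrow> ('g \<Rightarrow>\<^sub>0 'k)) \<Rightarrow> ('g \<Rightarrow>\<^sub>0 'k) set" where
  "kerR T = {v. T v = 0}"

definition kinv :: "('g::wellorder \<Rightarrow>\<^sub>0 'k::field) set \<Rightarrow> (('g \<Rightarrow>\<^sub>0 'k) \<Rightarrow> ('g \<Rightarrow>\<^sub>0 'k))" where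
  "kinv V = (THE T. reduction_op T \<and> kerR T = V)"

definition rjoin :: "(('g::wellorder \<Rightarrow>\<^sub>0 'k::field) \<Rightarrow> ('g \<Rightarrow>\<^sub>0 'k)) \<Rightarrow> (('g \<Rightarrow>\<^sub>0 'k) \<Rightarrow> ('g \<Rightarrow>\<^sub>0 'k))
    \<Rightarrow> (('g \<Rightarrow>\<^sub>0 'k) \<Rightarrow> ('g \<Rightarrow>\<^sub>0 'k))" where
  "rjoin T T' = kinv (kerR T \<inter> kerR T')"

definition meet_fam :: "(nat \<Rightarrow> ('g::wellorder \<Rightarrow>\<^sub>0 'k::field) \<Rightarrow> ('g \<Rightarrow>\<^sub>0 'k)) \<Rightarrow> nat
    \<Rightarrow> (('g \<Rightarrow>\<^sub>0 'k) \<Rightarrow> ('g \<Rightarrow>\<^sub>0 'k))" where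
  "meet_fam T k = kinv {(\<Sum>j\<in>{1..k}. x j) | x. \<forall>j\<in>{1..k}. x j \<in> kerR (T j)}"

definition Tdec :: "(('g::wellorder \<Rightarrow>\<^sub>0 'k::field) \<Rightarrow> ('g \<Rightarrow>\<^sub>0 'k)) \<Rightarrow> ('g \<Rightarrow>\<^sub>0 'k) \<Rightarrow> 'g \<Rightarrow> 'k" where
  "Tdec T v = (THE l. finite {g. l g \<noteq> 0} \<and> {g. l g \<noteq> 0} \<subseteq> red T \<and>
      v = (\<Sum>g\<in>{g. l g \<noteq> 0}. smul (l g) (rdelta g - T (rdelta g))))"

text \<open>Tuples (v_1,...,v_k) are functions nat \<Rightarrow> KG, zero outside {1..k}.\<close>
definition kerF :: "(nat \<Rightarrow> ('g::wellorder \<Rightarrow>\<^sub>0 'k::field) \<Rightarrow> ('g \<Rightarrow>\<^sub>0 'k)) \<Rightarrow> nat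
    \<Rightarrow> (nat \<Rightarrow> ('g \<Rightarrow>\<^sub>0 'k)) set" where
  "kerF T k = {x. (\<forall>j\<in>{1..k}. x j \<in> kerR (T j)) \<and> (\<forall>j. j \<notin> {1..k} \<longrightarrow> x j = 0)}"

definition piF :: "nat \<Rightarrow> (nat \<Rightarrow> ('g \<Rightarrow>\<^sub>0 'k::field)) \<Rightarrow> ('g \<Rightarrow>\<^sub>0 'k)" where
  "piF k x = (\<Sum>j\<in>{1..k}. x j)"

definition syz :: "(nat \<Rightarrow> ('g::wellorder \<Rightarrow>\<^sub>0 'k::field) \<Rightarrow> ('g \<Rightarrow>\<^sub>0 'k)) \<Rightarrow> nat
    \<Rightarrow> (nat \<Rightarrow> ('g \<Rightarrow>\<^sub>0 'k)) set" where
  "syz T k = {x \<in> kerF T k. piF k x = 0}"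

definition tsmul :: "'k::field \<Rightarrow> (nat \<Rightarrow> ('g \<Rightarrow>\<^sub>0 'k)) \<Rightarrow> (nat \<Rightarrow> ('g \<Rightarrow>\<^sub>0 'k))" where
  "tsmul c x = (\<lambda>j. smul c (x j))"

definition eF :: "(nat \<Rightarrow> ('g::wellorder \<Rightarrow>\<^sub>0 'k::field) \<Rightarrow> ('g \<Rightarrow>\<^sub>0 'k)) \<Rightarrow> nat \<Rightarrow> 'g
    \<Rightarrow> (nat \<Rightarrow> ('g \<Rightarrow>\<^sub>0 'k))" where
  "eF T j g = (\<lambda>j'. if j' = j then rdelta g - T j (rdelta g) else 0)"

definition coefF :: "(nat \<Rightarrow> ('g::wellorder \<Rightarrow>\<^sub>0 'k::field) \<Rightarrow> ('g \<Rightarrow>\<^sub>0 'k)) \<Rightarrow> nat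
    \<Rightarrow> (nat \<Rightarrow> ('g \<Rightarrow>\<^sub>0 'k)) \<Rightarrow> nat \<times> 'g \<Rightarrow> 'k" where
  "coefF T k x p = (if fst p \<in> {1..k} then Tdec (T (fst p)) (x (fst p)) (snd p) else 0)"

definition sqless :: "nat \<times> 'g::wellorder \<Rightarrow> nat \<times> 'g \<Rightarrow> bool" where
  "sqless p q \<longleftrightarrow> fst p < fst q \<or> (fst p = fst q \<and> snd p < snd q)"

definition ltF :: "(nat \<Rightarrow> ('g::wellorder \<Rightarrow>\<^sub>0 'k::field) \<Rightarrow> ('g \<Rightarrow>\<^sub>0 'k)) \<Rightarrow> nat
    \<Rightarrow> (nat \<Rightarrow> ('g \<Rightarrow>\<^sub>0 'k)) \<Rightarrow> nat \<times> 'g" where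
  "ltF T k x = (THE p. coefF T k x p \<noteq> 0 \<and> (\<forall>q. coefF T k x q \<noteq> 0 \<longrightarrow> q = p \<or> sqless q p))"

definition ltsyz :: "(nat \<Rightarrow> ('g::wellorder \<Rightarrow>\<^sub>0 'k::field) \<Rightarrow> ('g \<Rightarrow>\<^sub>0 'k)) \<Rightarrow> nat \<Rightarrow> (nat \<times> 'g) set" where
  "ltsyz T k = {ltF T k x | x. x \<in> syz T k \<and> x \<noteq> 0}"

definition candec :: "(nat \<Rightarrow> ('g::wellorder \<Rightarrow>\<^sub>0 'k::field) \<Rightarrow> ('g \<Rightarrow>\<^sub>0 'k)) \<Rightarrow> nat
    \<Rightarrow> ('g \<Rightarrow>\<^sub>0 'k) \<Rightarrow> nat \<times> 'g \<Rightarrow> 'k" where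
  "candec T k v = (THE c. finite {p. c p \<noteq> 0} \<and>
      (\<forall>p. c p \<noteq> 0 \<longrightarrow> fst p \<in> {1..k} \<and> snd p \<in> red (T (fst p)) \<and> p \<notin> ltsyz T k) \<and>
      v = (\<Sum>p\<in>{p. c p \<noteq> 0}. smul (c p) (rdelta (snd p) - T (fst p) (rdelta (snd p)))))"

definition vvec :: "(nat \<Rightarrow> ('g::wellorder \<Rightarrow>\<^sub>0 'k::field) \<Rightarrow> ('g \<Rightarrow>\<^sub>0 'k)) \<Rightarrow> nat \<Rightarrow> 'g \<Rightarrow> ('g \<Rightarrow>\<^sub>0 'k)" where
  "vvec T i g0 = rdelta g0 - rjoin (meet_fam T (i - 1)) (T i) (rdelta g0)"

definition svec :: "(nat \<Rightarrow> ('g::wellorder \<Rightarrow>\<^sub>0 'k::field) \<Rightarrow> ('g \<Rightarrow>\<^sub>0 'k)) \<Rightarrow> nat \<Rightarrow> 'g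
    \<Rightarrow> (nat \<Rightarrow> ('g \<Rightarrow>\<^sub>0 'k))" where
  "svec T i g0 =
     (let v = vvec T i g0; l = Tdec (T i) v; c = candec T (i - 1) v in
       (\<Sum>g\<in>{g. l g \<noteq> 0}. tsmul (l g) (eF T i g))
       - (\<Sum>p\<in>{p. c p \<noteq> 0}. tsmul (c p) (eF T (fst p) (snd p))))"

primrec Bset :: "(nat \<Rightarrow> ('g::wellorder \<Rightarrow>\<^sub>0 'k::field) \<Rightarrow> ('g \<Rightarrow>\<^sub>0 'k)) \<Rightarrow> nat
    \<Rightarrow> (nat \<Rightarrow> ('g \<Rightarrow>\<^sub>0 'k)) set" where
  "Bset T 0 = {}"
| "Bset T (Suc i) = (if i = 0 then {} else
      Bset T i \<union> {svec T (Suc i) g0 | g0. g0 \<in> red (rjoin (meet_fam T i) (T (Suc i)))})"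

end

theory Submission
  imports Defs "HOL-Library.Product_Lexorder" "HOL-Library.Multiset_Order"
begin

text \<open>Order the coordinates (j, h) of ker(F) lexicographically. Each s_{i,g0} is a syzygy that
  vanishes beyond position i and equals v_{i,g0} there, a vector whose largest key is g0 with
  coefficient 1; so the generators are triangular with distinct diagonal coordinates (i, g0),
  hence independent. Conversely, if x is a syzygy of T_1, ..., T_n, then -x_n lies in
  ker U_{n-1} \<inter> ker T_n = ker (U_{n-1} \<or> T_n), so it is a combination of the v_{n,g0};
  subtracting the same combination of the s_{n,g0} leaves a syzygy of T_1, ..., T_{n-1}, and
  induction on n shows that B_n spans. Along the way, ker^{-1}(V) is identified with reduction
  to normal form modulo V, and the canonical decomposition is obtained by cancelling coefficients
  at leading terms of syzygies, which strictly decreases the multiset of occurring indices.\<close>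

section \<open>The vector space KG\<close>

abbreviation lookup :: "('g \<Rightarrow>\<^sub>0 'k::zero) \<Rightarrow> 'g \<Rightarrow> 'k" where
  "lookup \<equiv> Poly_Mapping.lookup"

abbreviation keys :: "('g \<Rightarrow>\<^sub>0 'k::zero) \<Rightarrow> 'g set" where
  "keys \<equiv> Poly_Mapping.keys"

lemma lookup_smul [simp]: "lookup (smul c v) x = c * lookup v x"
  by (simp add: smul_def Poly_Mapping.map.rep_eq when_def)

lemma lookup_rdelta: "lookup (rdelta g :: 'g \<Rightarrow>\<^sub>0 'k::field) x = (if x = g then 1 else 0)"
  by (simp add: rdelta_def lookup_single when_def)

lemma keys_rdelta [simp]: "keys (rdelta g :: 'g \<Rightarrow>\<^sub>0 'k::field) = {g}"
  by (simp add: rdelta_def)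

lemma rdelta_neq_zero [simp]: "rdelta g \<noteq> (0 :: 'g \<Rightarrow>\<^sub>0 'k::field)"
  using keys_rdelta[of g] by (metis empty_not_insert keys_zero)

interpretation KG: module "smul :: 'k::field \<Rightarrow> ('g \<Rightarrow>\<^sub>0 'k) \<Rightarrow> _"
  by standard (auto intro!: poly_mapping_eqI simp: lookup_add algebra_simps)

lemma keys_smul: "keys (smul c v) \<subseteq> keys v"
  by (auto simp: in_keys_iff)

lemma poly_mapping_expansion:
  "(v :: 'g \<Rightarrow>\<^sub>0 'k::field) = (\<Sum>x\<in>keys v. smul (lookup v x) (rdelta x))"
proof (rule poly_mapping_eqI)
  fix h
  show "lookup v h = lookup (\<Sum>x\<in>keys v. smul (lookup v x) (rdelta x)) h"
    by (cases "h \<in> keys v")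
      (simp_all add: lookup_sum lookup_rdelta in_keys_iff if_distrib[where f="\<lambda>y. _ * y"] cong: if_cong)
qed

lemma rlt_in_keys: "v \<noteq> 0 \<Longrightarrow> rlt v \<in> keys v"
  unfolding rlt_def by (rule Max_in) auto

lemma le_rlt: "x \<in> keys v \<Longrightarrow> x \<le> rlt v"
  unfolding rlt_def by (rule Max_ge) auto

lemma rlt_rdelta [simp]: "rlt (rdelta g :: 'g::wellorder \<Rightarrow>\<^sub>0 'k::field) = g"
  by (simp add: rlt_def)

section \<open>Reduction operators\<close>

locale reduction_operator =
  module_hom "smul :: 'k::field \<Rightarrow> ('g::wellorder \<Rightarrow>\<^sub>0 'k) \<Rightarrow> _" smul T
  for T :: "('g::wellorder \<Rightarrow>\<^sub>0 'k::field) \<Rightarrow> ('g \<Rightarrow>\<^sub>0 'k)" +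
  assumes idem: "T (T v) = T v"
    and image_rdelta_le: "vle (T (rdelta g)) (rdelta g)"

lemma reduction_op_iff: "reduction_op T \<longleftrightarrow> reduction_operator T"
  by (auto simp: reduction_op_def reduction_operator_def reduction_operator_axioms_def
      module_hom_def module_hom_axioms_def klinear_def KG.module_axioms)

context reduction_operator
begin

lemma image_rdelta_not_red: "g \<notin> red T \<Longrightarrow> T (rdelta g) = rdelta g"
  by (simp add: red_def)

lemma keys_image_red_less:
  assumes "g \<in> red T" "x \<in> keys (T (rdelta g))"
  shows "x < g"
proof -
  have "vless (T (rdelta g)) (rdelta g)"
    using assms(1) image_rdelta_le[of g] by (simp add: vle_def red_def)
  moreover have "T (rdelta g) \<noteq> 0" using assms(2) by auto
  ultimately have "rlt (T (rdelta g)) < g" by (simp add: vless_def rlt_def)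
  thus ?thesis using le_rlt[OF assms(2)] by simp
qed

lemma keys_image_le: "x \<in> keys (T (rdelta g)) \<Longrightarrow> x \<le> g"
  by (cases "g \<in> red T") (auto dest: keys_image_red_less simp: image_rdelta_not_red)

lemma image_expansion: "T v = (\<Sum>x\<in>keys v. smul (lookup v x) (T (rdelta x)))"
  by (subst poly_mapping_expansion) (simp add: sum scale)

lemma diff_image_in_kerR: "v - T v \<in> kerR T"
  by (simp add: kerR_def diff idem)

lemma subspace_kerR: "KG.subspace (kerR T)"
  by (auto simp: KG.subspace_def kerR_def add scale)

text \<open>If h were the largest key of T w lying in red T, its coefficient in T (T w) = T w would vanish.\<close>

lemma keys_image_disjoint_red: "keys (T w) \<inter> red T = {}"
proof (rule ccontr)
  assume "keys (T w) \<inter> red T \<noteq> {}"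
  define h where "h = Max (keys (T w) \<inter> red T)"
  have h: "h \<in> keys (T w) \<inter> red T"
    unfolding h_def by (rule Max_in) (use \<open>keys (T w) \<inter> red T \<noteq> {}\<close> in auto)
  have "lookup (T (T w)) h = (\<Sum>x\<in>keys (T w). lookup (T w) x * lookup (T (rdelta x)) h)"
    by (subst image_expansion) (simp add: lookup_sum)
  also have "\<dots> = 0"
  proof (rule sum.neutral, rule ballI)
    fix x assume x: "x \<in> keys (T w)"
    have "lookup (T (rdelta x)) h = 0"
    proof (cases "x \<in> red T")
      case True
      hence "x \<le> h" using x unfolding h_def by (auto intro: Max_ge)
      thus ?thesis using keys_image_red_less[OF True, of h] by (force simp: in_keys_iff)
    next
      case False
      thus ?thesis using h by (auto simp: image_rdelta_not_red lookup_rdelta)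
    qed
    thus "lookup (T w) x * lookup (T (rdelta x)) h = 0" by simp
  qed
  finally show False using h by (auto simp: idem in_keys_iff)
qed

lemma lookup_kernel_vec_self: "g \<in> red T \<Longrightarrow> lookup (rdelta g - T (rdelta g)) g = 1"
  using keys_image_red_less[of g g] by (auto simp: in_keys_iff lookup_minus lookup_rdelta)

lemma keys_kernel_vec_le: "x \<in> keys (rdelta g - T (rdelta g)) \<Longrightarrow> x \<le> g"
  using keys_diff[of "rdelta g" "T (rdelta g)"] keys_image_le by auto

lemma kerR_expansion:
  assumes "v \<in> kerR T"
  shows "v = (\<Sum>g\<in>keys v \<inter> red T. smul (lookup v g) (rdelta g - T (rdelta g)))"
proof -
  have "v = v - T v" using assms by (simp add: kerR_def)
  also have "\<dots> = (\<Sum>x\<in>keys v. smul (lookup v x) (rdelta x - T (rdelta x)))"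
    by (subst (1) poly_mapping_expansion, subst image_expansion)
      (simp add: sum_subtractf KG.scale_right_diff_distrib)
  also have "\<dots> = (\<Sum>g\<in>keys v \<inter> red T. smul (lookup v g) (rdelta g - T (rdelta g)))"
    by (rule sum.mono_neutral_right) (auto simp: image_rdelta_not_red)
  finally show ?thesis .
qed

lemma lookup_kerR_combination:
  assumes "finite S" "S \<subseteq> red T" "h \<in> red T"
  shows "lookup (\<Sum>g\<in>S. smul (l g) (rdelta g - T (rdelta g))) h = (if h \<in> S then l h else 0)"
proof -
  define u where "u = (\<Sum>g\<in>S. smul (l g) (rdelta g))"
  have "(\<Sum>g\<in>S. smul (l g) (rdelta g - T (rdelta g))) = u - T u"
    by (simp add: u_def sum scale sum_subtractf KG.scale_right_diff_distrib)
  moreover have "lookup (T u) h = 0"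
    using keys_image_disjoint_red[of u] assms(3) by (auto simp: in_keys_iff)
  moreover have "lookup u h = (if h \<in> S then l h else 0)"
    using assms(1) by (simp add: u_def lookup_sum lookup_rdelta if_distrib[where f="\<lambda>y. _ * y"] cong: if_cong)
  ultimately show ?thesis by (simp add: lookup_minus)
qed

lemma kerR_eqI:
  assumes "u \<in> kerR T" "v \<in> kerR T" "\<And>g. g \<in> red T \<Longrightarrow> lookup u g = lookup v g"
  shows "u = v"
proof -
  have "u - v \<in> kerR T" using assms(1,2) by (simp add: kerR_def diff)
  moreover have "keys (u - v) \<inter> red T = {}" using assms(3) by (auto simp: in_keys_iff lookup_minus)
  ultimately have "u - v = 0" using kerR_expansion[of "u - v"] by simp
  thus ?thesis by simp
qed

lemma Tdec_eq:
  assumes "v \<in> kerR T"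
  shows "Tdec T v = (\<lambda>g. if g \<in> red T then lookup v g else 0)"
  unfolding Tdec_def
proof (rule the_equality)
  have "{g. (if g \<in> red T then lookup v g else 0) \<noteq> 0} = keys v \<inter> red T"
    by (auto simp: in_keys_iff)
  thus "finite {g. (if g \<in> red T then lookup v g else 0) \<noteq> 0} \<and>
      {g. (if g \<in> red T then lookup v g else 0) \<noteq> 0} \<subseteq> red T \<and>
      v = (\<Sum>g\<in>{g. (if g \<in> red T then lookup v g else 0) \<noteq> 0}.
             smul (if g \<in> red T then lookup v g else 0) (rdelta g - T (rdelta g)))"
    using kerR_expansion[OF assms] by auto
next
  fix l assume l: "finite {g. l g \<noteq> 0} \<and> {g. l g \<noteq> 0} \<subseteq> red T \<and>
      v = (\<Sum>g\<in>{g. l g \<noteq> 0}. smul (l g) (rdelta g - T (rdelta g)))"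
  show "l = (\<lambda>g. if g \<in> red T then lookup v g else 0)"
  proof
    fix g show "l g = (if g \<in> red T then lookup v g else 0)"
      using l lookup_kerR_combination[of "{g. l g \<noteq> 0}" g l] by auto
  qed
qed

lemma rlt_kerR_in_red:
  assumes "v \<in> kerR T" "v \<noteq> 0"
  shows "rlt v \<in> red T"
proof (rule ccontr)
  assume h: "rlt v \<notin> red T"
  have "lookup (T v) (rlt v) = (\<Sum>x\<in>keys v. lookup v x * lookup (T (rdelta x)) (rlt v))"
    by (subst image_expansion) (simp add: lookup_sum)
  also have "\<dots> = (\<Sum>x\<in>keys v. if x = rlt v then lookup v x else 0)"
  proof (rule sum.cong[OF refl])
    fix x assume x: "x \<in> keys v"
    show "lookup v x * lookup (T (rdelta x)) (rlt v) = (if x = rlt v then lookup v x else 0)"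
    proof (cases "x = rlt v")
      case True thus ?thesis using h by (simp add: image_rdelta_not_red lookup_rdelta)
    next
      case False
      hence "x < rlt v" using le_rlt[OF x] by simp
      hence "lookup (T (rdelta x)) (rlt v) = 0" using keys_image_le[of "rlt v" x] by (force simp: in_keys_iff)
      thus ?thesis using False by simp
    qed
  qed
  also have "\<dots> = lookup v (rlt v)" using rlt_in_keys[OF assms(2)] by simp
  finally show False using assms rlt_in_keys[OF assms(2)] by (simp add: kerR_def in_keys_iff)
qed

end

section \<open>The reduction operator with a given kernel\<close>

definition lead_terms :: "('g::wellorder \<Rightarrow>\<^sub>0 'k::field) set \<Rightarrow> 'g set" where
  "lead_terms V = {rlt v | v. v \<in> V \<and> v \<noteq> 0}"

lemma monic_vector_with_lead:
  assumes V: "KG.subspace V" and g: "g \<in> lead_terms V"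
  obtains y where "y \<in> V" "lookup y g = 1" "\<And>x. x \<in> keys y \<Longrightarrow> x \<le> g"
proof -
  obtain v where v: "v \<in> V" "v \<noteq> 0" "rlt v = g" using g by (auto simp: lead_terms_def)
  have nz: "lookup v g \<noteq> 0" using rlt_in_keys[OF v(2)] v(3) by (simp add: in_keys_iff)
  show ?thesis
  proof
    show "smul (inverse (lookup v g)) v \<in> V" using KG.subspace_scale[OF V v(1)] .
    show "lookup (smul (inverse (lookup v g)) v) g = 1" using nz by simp
    show "x \<le> g" if "x \<in> keys (smul (inverse (lookup v g)) v)" for x
      using that keys_smul[of _ v] le_rlt[of x v] v(3) by blast
  qed
qed

lemma mset_set_less_if_replaced_by_smaller:
  fixes A B :: "'a::linorder set"
  assumes "finite A" "finite B" "q \<in> A" "q \<notin> B" "\<And>x. x \<in> B \<Longrightarrow> x \<notin> A \<Longrightarrow> x < q"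
  shows "mset_set B < mset_set A"
  unfolding less_multiset\<^sub>H\<^sub>O
proof (intro conjI allI impI)
  show "mset_set B \<noteq> mset_set A" using assms by (metis elem_mset_set)
  fix y assume "count (mset_set A) y < count (mset_set B) y"
  hence "y \<in> B" "y \<notin> A" using assms(1,2) by (auto simp: count_mset_set' split: if_splits)
  thus "\<exists>x>y. count (mset_set B) x < count (mset_set A) x"
    using assms by (intro exI[of _ q]) (simp add: count_mset_set')
qed

lemma cancel_lead_term:
  assumes V: "KG.subspace V" and m: "m \<in> lead_terms V"
  obtains w1 where "w - w1 \<in> V" "m \<notin> keys w1" "keys w1 \<subseteq> keys w \<union> {..<m}"
proof -
  obtain y where y: "y \<in> V" "lookup y m = 1" "\<And>x. x \<in> keys y \<Longrightarrow> x \<le> m"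
    using monic_vector_with_lead[OF V m] by blast
  define w1 where "w1 = w - smul (lookup w m) y"
  show ?thesis
  proof
    show "w - w1 \<in> V" using KG.subspace_scale[OF V y(1)] by (simp add: w1_def)
    show "m \<notin> keys w1" using y(2) by (simp add: w1_def in_keys_iff lookup_minus)
    show "keys w1 \<subseteq> keys w \<union> {..<m}"
    proof
      fix x assume x: "x \<in> keys w1"
      hence "x \<in> keys w \<or> x \<in> keys y"
        unfolding w1_def using keys_diff[of w] keys_smul[of _ y] by blast
      moreover have "x \<noteq> m" using x \<open>m \<notin> keys w1\<close> by blast
      ultimately show "x \<in> keys w \<union> {..<m}" using y(3)[of x] by auto
    qed
  qed
qed

text \<open>Gaussian elimination, by induction on the multiset of keys of w that are leading terms of V.
  Keeping the keys of r below every strict bound on the keys of w is what later gives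
  T g < g for the resulting operator.\<close>

lemma normal_form_exists:
  fixes V :: "('g::wellorder \<Rightarrow>\<^sub>0 'k::field) set"
  assumes V: "KG.subspace V"
  shows "\<exists>r. w - r \<in> V \<and> keys r \<inter> lead_terms V = {} \<and>
    (\<forall>b. keys w \<subseteq> {..<b} \<longrightarrow> keys r \<subseteq> {..<b})"
proof (induction "mset_set (keys w \<inter> lead_terms V)" arbitrary: w rule: less_induct)
  case less
  show ?case
  proof (cases "keys w \<inter> lead_terms V = {}")
    case True
    have "w - w \<in> V" using KG.subspace_0[OF V] by simp
    with True show ?thesis by blast
  next
    case False
    define m where "m = Max (keys w \<inter> lead_terms V)"
    have m: "m \<in> keys w" "m \<in> lead_terms V"
      using Max_in[OF _ False] unfolding m_def by simp_all
    obtain w1 where w1: "w - w1 \<in> V" "m \<notin> keys w1" "keys w1 \<subseteq> keys w \<union> {..<m}"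
      using cancel_lead_term[OF V m(2)] by blast
    have "mset_set (keys w1 \<inter> lead_terms V) < mset_set (keys w \<inter> lead_terms V)"
      using m w1(2,3) by (intro mset_set_less_if_replaced_by_smaller) auto
    then obtain r where r: "w1 - r \<in> V" "keys r \<inter> lead_terms V = {}"
      "\<And>b. keys w1 \<subseteq> {..<b} \<Longrightarrow> keys r \<subseteq> {..<b}"
      using less by blast
    have "w - r = (w - w1) + (w1 - r)" by simp
    also have "\<dots> \<in> V" by (rule KG.subspace_add[OF V w1(1) r(1)])
    finally have "w - r \<in> V" .
    moreover have "keys r \<subseteq> {..<b}" if b: "keys w \<subseteq> {..<b}" for b
    proof (rule r(3))
      have "m < b" using b m(1) by auto
      thus "keys w1 \<subseteq> {..<b}" using b w1(3) by auto
    qed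
    ultimately show ?thesis using r(2) by blast
  qed
qed

lemma normal_form_unique:
  assumes V: "KG.subspace V" and "w - r1 \<in> V" "w - r2 \<in> V"
    and "keys r1 \<inter> lead_terms V = {}" "keys r2 \<inter> lead_terms V = {}"
  shows "r1 = r2"
proof (rule ccontr)
  assume "r1 \<noteq> r2"
  have "r1 - r2 \<in> V" using KG.subspace_diff[OF V assms(3) assms(2)] by simp
  hence "rlt (r1 - r2) \<in> lead_terms V" using \<open>r1 \<noteq> r2\<close> by (auto simp: lead_terms_def)
  moreover have "rlt (r1 - r2) \<in> keys r1 \<union> keys r2"
    using rlt_in_keys[of "r1 - r2"] keys_diff[of r1 r2] \<open>r1 \<noteq> r2\<close> by auto
  ultimately show False using assms(4,5) by blast
qed

definition normal_form :: "('g::wellorder \<Rightarrow>\<^sub>0 'k::field) set \<Rightarrow> ('g \<Rightarrow>\<^sub>0 'k) \<Rightarrow> ('g \<Rightarrow>\<^sub>0 'k)" where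
  "normal_form V w = (SOME r. w - r \<in> V \<and> keys r \<inter> lead_terms V = {} \<and>
     (\<forall>b. keys w \<subseteq> {..<b} \<longrightarrow> keys r \<subseteq> {..<b}))"

context
  fixes V :: "('g::wellorder \<Rightarrow>\<^sub>0 'k::field) set"
  assumes V: "KG.subspace V"
begin

lemma normal_form:
  "w - normal_form V w \<in> V" "keys (normal_form V w) \<inter> lead_terms V = {}"
  "keys w \<subseteq> {..<b} \<Longrightarrow> keys (normal_form V w) \<subseteq> {..<b}"
  using someI_ex[OF normal_form_exists[OF V, of w]] by (simp_all add: normal_form_def)

lemma normal_form_eqI: "w - r \<in> V \<Longrightarrow> keys r \<inter> lead_terms V = {} \<Longrightarrow> normal_form V w = r"
  using normal_form_unique[OF V normal_form(1)] normal_form(2) by blast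

lemma normal_form_lead_term_less:
  assumes "g \<in> lead_terms V" "x \<in> keys (normal_form V (rdelta g))"
  shows "x < g"
proof -
  obtain y where y: "y \<in> V" "lookup y g = 1" "\<And>x. x \<in> keys y \<Longrightarrow> x \<le> g"
    using monic_vector_with_lead[OF V assms(1)] by blast
  have "keys (rdelta g - y) \<subseteq> {..<g}"
  proof
    fix x assume x: "x \<in> keys (rdelta g - y)"
    hence "x \<le> g" using keys_diff[of "rdelta g" y] y(3) by auto
    moreover have "x \<noteq> g" using x y(2) by (auto simp: in_keys_iff lookup_minus lookup_rdelta)
    ultimately show "x \<in> {..<g}" by simp
  qed
  moreover have "normal_form V (rdelta g) = normal_form V (rdelta g - y)"
  proof (rule normal_form_eqI)
    have e: "rdelta g - normal_form V (rdelta g - y) = y + (rdelta g - y - normal_form V (rdelta g - y))"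
      by simp
    show "rdelta g - normal_form V (rdelta g - y) \<in> V"
      unfolding e by (rule KG.subspace_add[OF V y(1) normal_form(1)])
  qed (rule normal_form(2))
  ultimately show ?thesis using normal_form(3) assms(2) by auto
qed

lemma reduction_operator_normal_form: "reduction_operator (normal_form V)"
proof unfold_locales
  show "normal_form V (u + v) = normal_form V u + normal_form V v" for u v
  proof (rule normal_form_eqI)
    have e: "u + v - (normal_form V u + normal_form V v) = (u - normal_form V u) + (v - normal_form V v)"
      by simp
    show "u + v - (normal_form V u + normal_form V v) \<in> V"
      unfolding e by (rule KG.subspace_add[OF V normal_form(1) normal_form(1)])
    show "keys (normal_form V u + normal_form V v) \<inter> lead_terms V = {}"
      using keys_add[of "normal_form V u" "normal_form V v"] normal_form(2) by blast
  qed
  show "normal_form V (smul c v) = smul c (normal_form V v)" for c v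
  proof (rule normal_form_eqI)
    show "smul c v - smul c (normal_form V v) \<in> V"
      using KG.subspace_scale[OF V normal_form(1)] by (simp add: KG.scale_right_diff_distrib)
    show "keys (smul c (normal_form V v)) \<inter> lead_terms V = {}"
      using keys_smul[of c "normal_form V v"] normal_form(2)[of v] by blast
  qed
  show "normal_form V (normal_form V v) = normal_form V v" for v
    by (rule normal_form_eqI) (simp_all add: KG.subspace_0[OF V] normal_form(2))
  show "vle (normal_form V (rdelta g)) (rdelta g)" for g
  proof (cases "g \<in> lead_terms V")
    case False
    hence "normal_form V (rdelta g) = rdelta g"
      by (intro normal_form_eqI) (simp_all add: KG.subspace_0[OF V])
    thus ?thesis by (simp add: vle_def)
  next
    case True
    show ?thesis
    proof (cases "normal_form V (rdelta g) = 0")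
      case False
      thus ?thesis using normal_form_lead_term_less[OF True rlt_in_keys[OF False]]
        by (simp add: vle_def vless_def)
    qed (simp add: vle_def vless_def)
  qed
qed

lemma kerR_normal_form: "kerR (normal_form V) = V"
proof
  show "kerR (normal_form V) \<subseteq> V"
  proof
    fix w assume "w \<in> kerR (normal_form V)"
    thus "w \<in> V" using normal_form(1)[of w] by (simp add: kerR_def)
  qed
  show "V \<subseteq> kerR (normal_form V)"
    using normal_form_eqI[of _ 0] by (auto simp: kerR_def)
qed

lemma kinv_eq_normal_form: "kinv V = normal_form V"
  unfolding kinv_def
proof (rule the_equality)
  show "reduction_op (normal_form V) \<and> kerR (normal_form V) = V"
    using reduction_operator_normal_form kerR_normal_form by (simp add: reduction_op_iff)
next
  fix T assume T: "reduction_op T \<and> kerR T = V"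
  then interpret reduction_operator T by (simp add: reduction_op_iff)
  have lead: "lead_terms V \<subseteq> red T"
    using T rlt_kerR_in_red by (auto simp: lead_terms_def)
  show "T = normal_form V"
  proof
    fix w
    show "T w = normal_form V w"
      using keys_image_disjoint_red[of w] diff_image_in_kerR[of w] T lead
      by (intro normal_form_eqI[symmetric]) auto
  qed
qed

lemma kinv: "reduction_operator (kinv V)" "kerR (kinv V) = V"
  using reduction_operator_normal_form kerR_normal_form by (simp_all add: kinv_eq_normal_form)

end

section \<open>Families of reduction operators and their syzygies\<close>

lemma sum_fun_apply: "(sum f A :: 'a \<Rightarrow> 'b::comm_monoid_add) x = (\<Sum>a\<in>A. f a x)"
  by (induct A rule: infinite_finite_induct) auto

lemma tsmul_apply [simp]: "tsmul c x j = smul c (x j)"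
  by (simp add: tsmul_def)

interpretation TP: module "tsmul :: 'k::field \<Rightarrow> (nat \<Rightarrow> ('g \<Rightarrow>\<^sub>0 'k)) \<Rightarrow> _"
  by standard (auto simp: fun_eq_iff KG.scale_right_distrib KG.scale_left_distrib)

text \<open>A coefficient function c on index pairs (j, g) stands for the element
  \<Sum> c(j,g) e_{j,g} of ker(F) (tuple_of) and for its image under \<pi> (lincomb).\<close>

definition sum_kernels :: "(nat \<Rightarrow> ('g::wellorder \<Rightarrow>\<^sub>0 'k::field) \<Rightarrow> ('g \<Rightarrow>\<^sub>0 'k)) \<Rightarrow> nat \<Rightarrow> ('g \<Rightarrow>\<^sub>0 'k) set" where
  "sum_kernels T k = {(\<Sum>j\<in>{1..k}. x j) | x. \<forall>j\<in>{1..k}. x j \<in> kerR (T j)}"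

definition red_pairs :: "(nat \<Rightarrow> ('g::wellorder \<Rightarrow>\<^sub>0 'k::field) \<Rightarrow> ('g \<Rightarrow>\<^sub>0 'k)) \<Rightarrow> nat \<Rightarrow> (nat \<times> 'g) set" where
  "red_pairs T k = {p. fst p \<in> {1..k} \<and> snd p \<in> red (T (fst p))}"

definition supp :: "('a \<Rightarrow> 'k::zero) \<Rightarrow> 'a set" where
  "supp c = {p. c p \<noteq> 0}"

definition kernel_vec :: "(nat \<Rightarrow> ('g::wellorder \<Rightarrow>\<^sub>0 'k::field) \<Rightarrow> ('g \<Rightarrow>\<^sub>0 'k)) \<Rightarrow> nat \<times> 'g \<Rightarrow> ('g \<Rightarrow>\<^sub>0 'k)" where
  "kernel_vec T p = rdelta (snd p) - T (fst p) (rdelta (snd p))"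

definition lincomb :: "(nat \<Rightarrow> ('g::wellorder \<Rightarrow>\<^sub>0 'k::field) \<Rightarrow> ('g \<Rightarrow>\<^sub>0 'k)) \<Rightarrow> (nat \<times> 'g \<Rightarrow> 'k) \<Rightarrow> ('g \<Rightarrow>\<^sub>0 'k)" where
  "lincomb T c = (\<Sum>p\<in>supp c. smul (c p) (kernel_vec T p))"

definition tuple_of :: "(nat \<Rightarrow> ('g::wellorder \<Rightarrow>\<^sub>0 'k::field) \<Rightarrow> ('g \<Rightarrow>\<^sub>0 'k)) \<Rightarrow> (nat \<times> 'g \<Rightarrow> 'k) \<Rightarrow> (nat \<Rightarrow> ('g \<Rightarrow>\<^sub>0 'k))" where
  "tuple_of T c = (\<Sum>p\<in>supp c. tsmul (c p) (eF T (fst p) (snd p)))"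

lemma lincomb_superset:
  "finite S \<Longrightarrow> supp c \<subseteq> S \<Longrightarrow> lincomb T c = (\<Sum>p\<in>S. smul (c p) (kernel_vec T p))"
  unfolding lincomb_def by (rule sum.mono_neutral_left) (auto simp: supp_def)

lemma lincomb_add_scaled:
  assumes "finite (supp c1)" "finite (supp c2)"
  shows "lincomb T (\<lambda>p. c1 p + a * c2 p) = lincomb T c1 + smul a (lincomb T c2)"
proof -
  let ?S = "supp c1 \<union> supp c2"
  have S: "finite ?S" using assms by simp
  have "lincomb T (\<lambda>p. c1 p + a * c2 p) = (\<Sum>p\<in>?S. smul (c1 p + a * c2 p) (kernel_vec T p))"
    by (rule lincomb_superset[OF S]) (fastforce simp: supp_def)
  also have "\<dots> = (\<Sum>p\<in>?S. smul (c1 p) (kernel_vec T p)) + smul a (\<Sum>p\<in>?S. smul (c2 p) (kernel_vec T p))"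
    by (simp add: KG.scale_left_distrib sum.distrib KG.scale_sum_right)
  also have "\<dots> = lincomb T c1 + smul a (lincomb T c2)"
    using lincomb_superset[OF S, of c1 T] lincomb_superset[OF S, of c2 T] by simp
  finally show ?thesis .
qed

lemma supp_add_scaled: "supp (\<lambda>p. c1 p + a * c2 p) \<subseteq> supp c1 \<union> supp (c2 :: 'a \<Rightarrow> 'k::semiring_0)"
  by (auto simp: supp_def)

lemma tuple_of_apply:
  "tuple_of T c j = (\<Sum>p\<in>supp c. smul (c p) (if fst p = j then kernel_vec T p else 0))"
  unfolding tuple_of_def sum_fun_apply by (auto simp: eF_def kernel_vec_def intro!: sum.cong)

lemma module_hom_piF: "module_hom tsmul smul (piF k)"
  by unfold_locales (simp_all add: piF_def sum.distrib KG.scale_sum_right)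

lemma sqless_iff_less: "sqless p q \<longleftrightarrow> p < q"
  by (simp add: sqless_def less_prod_def')

locale reduction_family =
  fixes T :: "nat \<Rightarrow> ('g::wellorder \<Rightarrow>\<^sub>0 'k::field) \<Rightarrow> ('g \<Rightarrow>\<^sub>0 'k)" and k :: nat
  assumes reduction_operator: "j \<in> {1..k} \<Longrightarrow> reduction_operator (T j)"
begin

lemma subspace_kerR: "j \<in> {1..k} \<Longrightarrow> KG.subspace (kerR (T j))"
  using reduction_operator reduction_operator.subspace_kerR by blast

lemma subspace_kerF: "TP.subspace (kerF T k)"
proof (rule TP.subspaceI)
  show "0 \<in> kerF T k" using subspace_kerR by (simp add: kerF_def KG.subspace_0)
  show "x + y \<in> kerF T k" if "x \<in> kerF T k" "y \<in> kerF T k" for x y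
    using that subspace_kerR by (simp add: kerF_def KG.subspace_add)
  show "tsmul c x \<in> kerF T k" if "x \<in> kerF T k" for c x
    using that subspace_kerR by (simp add: kerF_def KG.subspace_scale)
qed

lemma sum_kernels_eq_image: "sum_kernels T k = piF k ` kerF T k"
proof
  show "sum_kernels T k \<subseteq> piF k ` kerF T k"
  proof
    fix v assume "v \<in> sum_kernels T k"
    then obtain x where x: "v = (\<Sum>j\<in>{1..k}. x j)" "\<forall>j\<in>{1..k}. x j \<in> kerR (T j)"
      by (auto simp: sum_kernels_def)
    define x' where "x' = (\<lambda>j. if j \<in> {1..k} then x j else 0)"
    have "x' \<in> kerF T k" using x(2) by (simp add: kerF_def x'_def)
    moreover have "piF k x' = v" using x(1) by (simp add: piF_def x'_def)
    ultimately show "v \<in> piF k ` kerF T k" by blast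
  qed
  show "piF k ` kerF T k \<subseteq> sum_kernels T k"
    by (auto simp: sum_kernels_def kerF_def piF_def)
qed

lemma subspace_sum_kernels: "KG.subspace (sum_kernels T k)"
  unfolding sum_kernels_eq_image by (rule module_hom.subspace_image[OF module_hom_piF subspace_kerF])

lemma meet_fam: "reduction_operator (meet_fam T k)" "kerR (meet_fam T k) = sum_kernels T k"
  using kinv[OF subspace_sum_kernels] unfolding meet_fam_def sum_kernels_def by auto

lemma subspace_syz: "TP.subspace (syz T k)"
proof -
  have "syz T k = kerF T k \<inter> {x. piF k x = 0}" by (auto simp: syz_def)
  thus ?thesis
    using TP.subspace_inter[OF subspace_kerF module_hom.subspace_kernel[OF module_hom_piF]] by simp
qed

lemma kernel_vec_in_kerR: "p \<in> red_pairs T k \<Longrightarrow> kernel_vec T p \<in> kerR (T (fst p))"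
  using reduction_operator reduction_operator.diff_image_in_kerR
  by (fastforce simp: red_pairs_def kernel_vec_def)

lemma tuple_of_in_kerF:
  assumes "supp c \<subseteq> red_pairs T k"
  shows "tuple_of T c \<in> kerF T k"
  unfolding tuple_of_def
proof (rule TP.subspace_sum[OF subspace_kerF])
  fix p assume "p \<in> supp c"
  hence p: "p \<in> red_pairs T k" using assms by blast
  have "eF T (fst p) (snd p) \<in> kerF T k"
    using kernel_vec_in_kerR[OF p] p TP.subspace_0[OF subspace_kerF]
    by (auto simp: kerF_def eF_def kernel_vec_def red_pairs_def)
  thus "tsmul (c p) (eF T (fst p) (snd p)) \<in> kerF T k"
    by (rule TP.subspace_scale[OF subspace_kerF])
qed

lemma piF_tuple_of:
  assumes "supp c \<subseteq> red_pairs T k"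
  shows "piF k (tuple_of T c) = lincomb T c"
  unfolding tuple_of_def lincomb_def module_hom.sum[OF module_hom_piF] module_hom.scale[OF module_hom_piF]
proof (rule sum.cong[OF refl])
  fix p assume "p \<in> supp c"
  hence "fst p \<in> {1..k}" using assms by (auto simp: red_pairs_def)
  thus "smul (c p) (piF k (eF T (fst p) (snd p))) = smul (c p) (kernel_vec T p)"
    by (simp add: piF_def eF_def kernel_vec_def)
qed

lemma coefF_kerF:
  assumes "x \<in> kerF T k"
  shows "coefF T k x p = (if p \<in> red_pairs T k then lookup (x (fst p)) (snd p) else 0)"
proof (cases "fst p \<in> {1..k}")
  case True
  interpret reduction_operator "T (fst p)" using reduction_operator[OF True] .
  have "x (fst p) \<in> kerR (T (fst p))" using assms True by (simp add: kerF_def)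
  thus ?thesis using True by (simp add: coefF_def Tdec_eq red_pairs_def)
qed (auto simp: coefF_def red_pairs_def)

lemma supp_coefF: "x \<in> kerF T k \<Longrightarrow> supp (coefF T k x) = Sigma {1..k} (\<lambda>j. keys (x j) \<inter> red (T j))"
  by (auto simp: coefF_kerF supp_def red_pairs_def in_keys_iff)

lemma coefF_supp_props:
  assumes "x \<in> kerF T k"
  shows "finite (supp (coefF T k x))" "supp (coefF T k x) \<subseteq> red_pairs T k"
  by (auto simp: supp_coefF[OF assms] red_pairs_def)

lemma coefF_tuple_of:
  assumes c: "finite (supp c)" "supp c \<subseteq> red_pairs T k"
  shows "coefF T k (tuple_of T c) = c"
proof
  fix p :: "nat \<times> 'g"
  show "coefF T k (tuple_of T c) p = c p"
  proof (cases "p \<in> red_pairs T k")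
    case False
    thus ?thesis using c(2) coefF_kerF[OF tuple_of_in_kerF[OF c(2)]] by (auto simp: supp_def)
  next
    case True
    hence j: "fst p \<in> {1..k}" and g: "snd p \<in> red (T (fst p))" by (auto simp: red_pairs_def)
    interpret reduction_operator "T (fst p)" using reduction_operator[OF j] .
    have "lookup (tuple_of T c (fst p)) (snd p) =
        (\<Sum>q\<in>supp c. c q * lookup (if fst q = fst p then kernel_vec T q else 0) (snd p))"
      by (simp add: tuple_of_apply lookup_sum)
    also have "\<dots> = (\<Sum>q\<in>supp c. if q = p then c q else 0)"
    proof (rule sum.cong[OF refl])
      fix q :: "nat \<times> 'g"
      have "lookup (T (fst p) (rdelta (snd q))) (snd p) = 0"
        using keys_image_disjoint_red[of "rdelta (snd q)"] g by (auto simp: in_keys_iff)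
      thus "c q * lookup (if fst q = fst p then kernel_vec T q else 0) (snd p) = (if q = p then c q else 0)"
        by (cases p, cases q) (auto simp: kernel_vec_def lookup_minus lookup_rdelta)
    qed
    also have "\<dots> = c p" using c(1) by (simp add: supp_def)
    finally show ?thesis using True coefF_kerF[OF tuple_of_in_kerF[OF c(2)]] by simp
  qed
qed

lemma tuple_of_coefF:
  assumes x: "x \<in> kerF T k"
  shows "tuple_of T (coefF T k x) = x"
proof
  fix j
  note c = coefF_supp_props[OF x]
  note t = tuple_of_in_kerF[OF c(2)]
  show "tuple_of T (coefF T k x) j = x j"
  proof (cases "j \<in> {1..k}")
    case True
    interpret reduction_operator "T j" using reduction_operator[OF True] .
    show ?thesis
    proof (rule kerR_eqI)
      show "tuple_of T (coefF T k x) j \<in> kerR (T j)" "x j \<in> kerR (T j)"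
        using t x True by (simp_all add: kerF_def)
      show "lookup (tuple_of T (coefF T k x) j) g = lookup (x j) g" if "g \<in> red (T j)" for g
        using coefF_kerF[OF t, of "(j, g)"] coefF_kerF[OF x, of "(j, g)"] coefF_tuple_of[OF c] True that
        by (simp add: red_pairs_def)
    qed
  next
    case False
    thus ?thesis using t x by (simp add: kerF_def)
  qed
qed

lemma piF_eq_lincomb_coefF: "x \<in> kerF T k \<Longrightarrow> piF k x = lincomb T (coefF T k x)"
  using piF_tuple_of[OF coefF_supp_props(2)] tuple_of_coefF by metis

lemma ltF_eq_Max:
  assumes x: "x \<in> kerF T k" "x \<noteq> 0"
  shows "supp (coefF T k x) \<noteq> {}" "ltF T k x = Max (supp (coefF T k x))"
proof -
  let ?S = "supp (coefF T k x)"
  note fin = coefF_supp_props(1)[OF x(1)]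
  show ne: "?S \<noteq> {}"
  proof
    assume "?S = {}"
    hence "tuple_of T (coefF T k x) = 0" by (simp add: tuple_of_def)
    thus False using x tuple_of_coefF[OF x(1)] by simp
  qed
  show "ltF T k x = Max ?S"
    unfolding ltF_def sqless_iff_less
  proof (rule the_equality)
    show "coefF T k x (Max ?S) \<noteq> 0 \<and> (\<forall>q. coefF T k x q \<noteq> 0 \<longrightarrow> q = Max ?S \<or> q < Max ?S)"
      using Max_in[OF fin ne] Max_ge[OF fin] by (auto simp: supp_def order.order_iff_strict)
  next
    fix p assume p: "coefF T k x p \<noteq> 0 \<and> (\<forall>q. coefF T k x q \<noteq> 0 \<longrightarrow> q = p \<or> q < p)"
    moreover have "coefF T k x (Max ?S) \<noteq> 0" using Max_in[OF fin ne] by (simp add: supp_def)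
    ultimately have "Max ?S = p \<or> Max ?S < p" by blast
    moreover have "p \<le> Max ?S" using p Max_ge[OF fin] by (simp add: supp_def)
    ultimately show "p = Max ?S" by auto
  qed
qed

lemma ltsyz_iff:
  "q \<in> ltsyz T k \<longleftrightarrow> (\<exists>c. finite (supp c) \<and> supp c \<subseteq> red_pairs T k \<and> lincomb T c = 0 \<and>
     supp c \<noteq> {} \<and> q = Max (supp c))"
proof
  assume "q \<in> ltsyz T k"
  then obtain x where x: "x \<in> syz T k" "x \<noteq> 0" "q = ltF T k x" by (auto simp: ltsyz_def)
  hence xk: "x \<in> kerF T k" by (simp add: syz_def)
  show "\<exists>c. finite (supp c) \<and> supp c \<subseteq> red_pairs T k \<and> lincomb T c = 0 \<and> supp c \<noteq> {} \<and> q = Max (supp c)"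
    using x coefF_supp_props[OF xk] piF_eq_lincomb_coefF[OF xk] ltF_eq_Max[OF xk x(2)]
    by (intro exI[of _ "coefF T k x"]) (simp add: syz_def)
next
  assume "\<exists>c. finite (supp c) \<and> supp c \<subseteq> red_pairs T k \<and> lincomb T c = 0 \<and> supp c \<noteq> {} \<and> q = Max (supp c)"
  then obtain c where c: "finite (supp c)" "supp c \<subseteq> red_pairs T k" "lincomb T c = 0"
    "supp c \<noteq> {}" "q = Max (supp c)" by blast
  define x where "x = tuple_of T c"
  have xk: "x \<in> kerF T k" unfolding x_def by (rule tuple_of_in_kerF[OF c(2)])
  have cx: "coefF T k x = c" unfolding x_def by (rule coefF_tuple_of[OF c(1,2)])
  have "x \<in> syz T k" using xk piF_tuple_of[OF c(2)] c(3) by (simp add: syz_def x_def)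
  moreover have "x \<noteq> 0"
  proof
    assume "x = 0"
    hence "coefF T k x = (\<lambda>_. 0)" using coefF_kerF[OF xk] by (simp add: fun_eq_iff)
    thus False using cx c(4) by (simp add: supp_def)
  qed
  moreover have "q = ltF T k x" using ltF_eq_Max(2)[OF xk \<open>x \<noteq> 0\<close>] cx c(5) by simp
  ultimately show "q \<in> ltsyz T k" unfolding ltsyz_def by blast
qed

text \<open>A coefficient at a leading term of a syzygy is cancelled against that syzygy, which only
  creates coefficients at smaller indices.\<close>

lemma canonical_decomposition_exists:
  assumes "finite (supp d)" "supp d \<subseteq> red_pairs T k"
  shows "\<exists>c. finite (supp c) \<and> supp c \<subseteq> red_pairs T k - ltsyz T k \<and> lincomb T c = lincomb T d"
  using assms
proof (induction "mset_set (supp d)" arbitrary: d rule: less_induct)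
  case less
  show ?case
  proof (cases "supp d \<inter> ltsyz T k = {}")
    case True
    thus ?thesis using less.prems by blast
  next
    case False
    then obtain q where q: "q \<in> supp d" "q \<in> ltsyz T k" by blast
    then obtain s where s: "finite (supp s)" "supp s \<subseteq> red_pairs T k" "lincomb T s = 0"
      "supp s \<noteq> {}" "q = Max (supp s)" by (auto simp: ltsyz_iff)
    have sq: "s q \<noteq> 0" using Max_in[OF s(1,4)] s(5) by (simp add: supp_def)
    define d' where "d' = (\<lambda>p. d p + (- (d q / s q)) * s p)"
    have supp_d': "supp d' \<subseteq> supp d \<union> supp s" unfolding d'_def by (rule supp_add_scaled)
    have "q \<notin> supp d'" using sq by (simp add: d'_def supp_def)
    moreover have "p < q" if "p \<in> supp d'" "p \<notin> supp d" for p
    proof -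
      have "p \<in> supp s" using that supp_d' by blast
      hence "p \<le> q" using Max_ge[OF s(1)] s(5) by simp
      thus ?thesis using that \<open>q \<notin> supp d'\<close> by (auto simp: order.order_iff_strict)
    qed
    ultimately have "mset_set (supp d') < mset_set (supp d)"
      using q(1) supp_d' less.prems(1) s(1)
      by (intro mset_set_less_if_replaced_by_smaller) (auto intro: finite_subset)
    moreover have "finite (supp d')" using supp_d' less.prems(1) s(1) by (auto intro: finite_subset)
    moreover have "supp d' \<subseteq> red_pairs T k" using supp_d' less.prems(2) s(2) by blast
    moreover have "lincomb T d' = lincomb T d"
      unfolding d'_def by (subst lincomb_add_scaled[OF less.prems(1) s(1)]) (simp add: s(3))
    ultimately show ?thesis using less.hyps by metis
  qed
qed

lemma canonical_decomposition_unique: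
  assumes "finite (supp c1)" "supp c1 \<subseteq> red_pairs T k - ltsyz T k"
    and "finite (supp c2)" "supp c2 \<subseteq> red_pairs T k - ltsyz T k"
    and "lincomb T c1 = lincomb T c2"
  shows "c1 = c2"
proof -
  define d where "d = (\<lambda>p. c1 p + (-1) * c2 p)"
  have supp_d: "supp d \<subseteq> supp c1 \<union> supp c2" unfolding d_def by (rule supp_add_scaled)
  have "supp d = {}"
  proof (rule ccontr)
    assume "supp d \<noteq> {}"
    moreover have "finite (supp d)" using supp_d assms(1,3) by (auto intro: finite_subset)
    moreover have "lincomb T d = 0"
      unfolding d_def by (subst lincomb_add_scaled[OF assms(1,3)]) (simp add: assms(5))
    moreover have "supp d \<subseteq> red_pairs T k" using supp_d assms(2,4) by blast
    ultimately have "Max (supp d) \<in> ltsyz T k" unfolding ltsyz_iff by blast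
    thus False using Max_in[OF \<open>finite (supp d)\<close> \<open>supp d \<noteq> {}\<close>] supp_d assms(2,4) by blast
  qed
  thus ?thesis by (auto simp: fun_eq_iff d_def supp_def)
qed

lemma sum_kernels_lincomb:
  assumes "v \<in> sum_kernels T k"
  obtains c where "finite (supp c)" "supp c \<subseteq> red_pairs T k" "lincomb T c = v"
proof -
  obtain x where "x \<in> kerF T k" "v = piF k x" using assms by (auto simp: sum_kernels_eq_image)
  thus ?thesis using that coefF_supp_props piF_eq_lincomb_coefF by metis
qed

lemma candec:
  assumes "v \<in> sum_kernels T k"
  shows "finite (supp (candec T k v))" "supp (candec T k v) \<subseteq> red_pairs T k - ltsyz T k"
    "lincomb T (candec T k v) = v"
proof -
  obtain c where c: "finite (supp c)" "supp c \<subseteq> red_pairs T k - ltsyz T k" "lincomb T c = v"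
    using sum_kernels_lincomb[OF assms] canonical_decomposition_exists by metis
  have "candec T k v = c"
    unfolding candec_def
  proof (rule the_equality)
    show "finite {p. c p \<noteq> 0} \<and>
        (\<forall>p. c p \<noteq> 0 \<longrightarrow> fst p \<in> {1..k} \<and> snd p \<in> red (T (fst p)) \<and> p \<notin> ltsyz T k) \<and>
        v = (\<Sum>p\<in>{p. c p \<noteq> 0}. smul (c p) (rdelta (snd p) - T (fst p) (rdelta (snd p))))"
      using c by (auto simp: supp_def lincomb_def kernel_vec_def red_pairs_def)
  next
    fix c' assume "finite {p. c' p \<noteq> 0} \<and>
        (\<forall>p. c' p \<noteq> 0 \<longrightarrow> fst p \<in> {1..k} \<and> snd p \<in> red (T (fst p)) \<and> p \<notin> ltsyz T k) \<and>
        v = (\<Sum>p\<in>{p. c' p \<noteq> 0}. smul (c' p) (rdelta (snd p) - T (fst p) (rdelta (snd p))))"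
    hence "finite (supp c')" "supp c' \<subseteq> red_pairs T k - ltsyz T k" "lincomb T c' = v"
      by (auto simp: supp_def lincomb_def kernel_vec_def red_pairs_def)
    thus "c' = c" using canonical_decomposition_unique c by metis
  qed
  thus "finite (supp (candec T k v))" "supp (candec T k v) \<subseteq> red_pairs T k - ltsyz T k"
    "lincomb T (candec T k v) = v"
    using c by simp_all
qed

end

section \<open>The generators of the syzygies\<close>

lemma reduction_family_mono: "reduction_family T k \<Longrightarrow> j \<le> k \<Longrightarrow> reduction_family T j"
  by (simp add: reduction_family_def)

lemma kerF_mono: "reduction_family T k \<Longrightarrow> j \<le> k \<Longrightarrow> kerF T j \<subseteq> kerF T k"
  using reduction_operator.subspace_kerR
  by (fastforce simp: kerF_def reduction_family_def KG.subspace_0)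

lemma rjoin:
  assumes "reduction_operator U" "reduction_operator S"
  shows "reduction_operator (rjoin U S)" "kerR (rjoin U S) = kerR U \<inter> kerR S"
  using kinv[OF KG.subspace_inter[OF reduction_operator.subspace_kerR[OF assms(1)]
        reduction_operator.subspace_kerR[OF assms(2)]]]
  by (simp_all add: rjoin_def)

lemma syz_restrict: "x \<in> syz T (Suc m) \<Longrightarrow> x (Suc m) = 0 \<Longrightarrow> x \<in> syz T m"
  by (auto simp: syz_def kerF_def piF_def le_Suc_eq)

context
  fixes T :: "nat \<Rightarrow> ('g::wellorder \<Rightarrow>\<^sub>0 'k::field) \<Rightarrow> ('g \<Rightarrow>\<^sub>0 'k)" and i :: nat
  assumes i: "2 \<le> i" and family: "reduction_family T i"
begin

interpretation prev: reduction_family T "i - 1"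
  using reduction_family_mono[OF family] by simp

interpretation Ti: reduction_operator "T i"
  using family i by (simp add: reduction_family_def)

interpretation R: reduction_operator "rjoin (meet_fam T (i - 1)) (T i)"
  using rjoin(1)[OF prev.meet_fam(1) Ti.reduction_operator_axioms] .

lemma kerR_join: "kerR (rjoin (meet_fam T (i - 1)) (T i)) = sum_kernels T (i - 1) \<inter> kerR (T i)"
  unfolding rjoin(2)[OF prev.meet_fam(1) Ti.reduction_operator_axioms] prev.meet_fam(2) ..

lemma syz_top_in_kerR_join:
  assumes x: "x \<in> syz T i"
  shows "x i \<in> kerR (rjoin (meet_fam T (i - 1)) (T i))"
proof -
  define x' where "x' = (\<lambda>j. if j = i then 0 else x j)"
  have x': "x' \<in> kerF T (i - 1)"
    using x by (auto simp: syz_def kerF_def x'_def)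
  have "piF (i - 1) x' = (\<Sum>j\<in>{1..i - 1}. x j)"
    unfolding piF_def x'_def by (rule sum.cong) auto
  moreover have "{1..i} = insert i {1..i - 1}" using i by auto
  ultimately have "x i + piF (i - 1) x' = piF i x" using i by (simp add: piF_def)
  hence "- x i = piF (i - 1) x'" using x by (simp add: syz_def add_eq_0_iff)
  hence "- x i \<in> sum_kernels T (i - 1)"
    unfolding prev.sum_kernels_eq_image using x' by (rule image_eqI)
  hence "- (- x i) \<in> sum_kernels T (i - 1)" by (rule KG.subspace_neg[OF prev.subspace_sum_kernels])
  moreover have "x i \<in> kerR (T i)" using x i by (simp add: syz_def kerF_def)
  ultimately show ?thesis unfolding kerR_join by simp
qed

context
  fixes g0 :: 'g
  assumes g0: "g0 \<in> red (rjoin (meet_fam T (i - 1)) (T i))"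
begin

lemma vvec_in_kernels: "vvec T i g0 \<in> sum_kernels T (i - 1)" "vvec T i g0 \<in> kerR (T i)"
proof -
  have "vvec T i g0 \<in> kerR (rjoin (meet_fam T (i - 1)) (T i))"
    unfolding vvec_def by (rule R.diff_image_in_kerR)
  thus "vvec T i g0 \<in> sum_kernels T (i - 1)" "vvec T i g0 \<in> kerR (T i)"
    unfolding kerR_join by simp_all
qed

lemma lookup_vvec_self: "lookup (vvec T i g0) g0 = 1"
  unfolding vvec_def by (rule R.lookup_kernel_vec_self[OF g0])

lemma keys_vvec_le: "x \<in> keys (vvec T i g0) \<Longrightarrow> x \<le> g0"
  unfolding vvec_def by (rule R.keys_kernel_vec_le)

lemma candec_vvec:
  "finite (supp (candec T (i - 1) (vvec T i g0)))"
  "supp (candec T (i - 1) (vvec T i g0)) \<subseteq> red_pairs T (i - 1)"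
  "lincomb T (candec T (i - 1) (vvec T i g0)) = vvec T i g0"
  using prev.candec[OF vvec_in_kernels(1)] by auto

lemma tuple_of_candec_vvec: "tuple_of T (candec T (i - 1) (vvec T i g0)) \<in> kerF T (i - 1)"
  by (rule prev.tuple_of_in_kerF[OF candec_vvec(2)])

text \<open>The T_i-decomposition of v_{i,g0} reassembles to v_{i,g0} in position i.\<close>

lemma svec_eq:
  "svec T i g0 = (\<lambda>j. if j = i then vvec T i g0 else 0) - tuple_of T (candec T (i - 1) (vvec T i g0))"
proof -
  let ?v = "vvec T i g0"
  have "{g. Tdec (T i) ?v g \<noteq> 0} = keys ?v \<inter> red (T i)"
    using Ti.Tdec_eq[OF vvec_in_kernels(2)] by (auto simp: in_keys_iff)
  hence "(\<Sum>g\<in>{g. Tdec (T i) ?v g \<noteq> 0}. tsmul (Tdec (T i) ?v g) (eF T i g)) j =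
      (if j = i then ?v else 0)" for j
    using Ti.Tdec_eq[OF vvec_in_kernels(2)] Ti.kerR_expansion[OF vvec_in_kernels(2)]
    by (auto simp: sum_fun_apply eF_def intro: sum.neutral)
  hence "(\<Sum>g\<in>{g. Tdec (T i) ?v g \<noteq> 0}. tsmul (Tdec (T i) ?v g) (eF T i g)) =
      (\<lambda>j. if j = i then ?v else 0)" by blast
  thus ?thesis unfolding svec_def Let_def tuple_of_def supp_def by simp
qed

lemma svec_above: "i < j \<Longrightarrow> svec T i g0 j = 0"
  using tuple_of_candec_vvec by (simp add: svec_eq kerF_def)

lemma svec_top: "svec T i g0 i = vvec T i g0"
  using tuple_of_candec_vvec i by (simp add: svec_eq kerF_def)

lemma svec_in_syz:
  assumes "reduction_family T m" "i \<le> m"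
  shows "svec T i g0 \<in> syz T m"
proof -
  interpret reduction_family T m by (rule assms(1))
  let ?v = "vvec T i g0" and ?c = "candec T (i - 1) (vvec T i g0)"
  let ?e = "\<lambda>j. if j = i then ?v else 0"
  note t = tuple_of_candec_vvec
  have "?e \<in> kerF T m"
    using vvec_in_kernels(2) assms(2) i KG.subspace_0[OF subspace_kerR] by (auto simp: kerF_def)
  moreover have "tuple_of T ?c \<in> kerF T m"
    using t kerF_mono[OF assms(1), of "i - 1"] assms(2) by (meson diff_le_self le_trans subsetD)
  ultimately have "svec T i g0 \<in> kerF T m"
    unfolding svec_eq by (rule TP.subspace_diff[OF subspace_kerF])
  moreover have "piF m ?e = ?v" using assms(2) i by (simp add: piF_def)
  moreover have "piF m (tuple_of T ?c) = ?v"
  proof -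
    have "piF m (tuple_of T ?c) = piF (i - 1) (tuple_of T ?c)"
      unfolding piF_def using t assms(2) by (intro sum.mono_neutral_right) (auto simp: kerF_def)
    thus ?thesis using prev.piF_tuple_of[OF candec_vvec(2)] candec_vvec(3) by simp
  qed
  ultimately show ?thesis by (simp add: syz_def svec_eq module_hom.diff[OF module_hom_piF])
qed

end

lemma svec_combination_top:
  assumes "v \<in> kerR (rjoin (meet_fam T (i - 1)) (T i))"
  shows "(\<Sum>g\<in>keys v \<inter> red (rjoin (meet_fam T (i - 1)) (T i)). tsmul (lookup v g) (svec T i g)) i = v"
  using R.kerR_expansion[OF assms] svec_top by (simp add: sum_fun_apply vvec_def)

end

definition generator_index :: "(nat \<Rightarrow> ('g::wellorder \<Rightarrow>\<^sub>0 'k::field) \<Rightarrow> ('g \<Rightarrow>\<^sub>0 'k)) \<Rightarrow> nat \<Rightarrow> (nat \<times> 'g) set" where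
  "generator_index T n =
     {p. 2 \<le> fst p \<and> fst p \<le> n \<and> snd p \<in> red (rjoin (meet_fam T (fst p - 1)) (T (fst p)))}"

lemma Bset_eq_image: "Bset T n = (\<lambda>p. svec T (fst p) (snd p)) ` generator_index T n"
proof (induction n)
  case (Suc n)
  show ?case
  proof (cases "n = 0")
    case False
    let ?X = "red (rjoin (meet_fam T n) (T (Suc n)))"
    have "generator_index T (Suc n) = generator_index T n \<union> Pair (Suc n) ` ?X"
      using False by (auto simp: generator_index_def le_Suc_eq)
    moreover have "(\<lambda>p. svec T (fst p) (snd p)) ` Pair (Suc n) ` ?X = {svec T (Suc n) g0 | g0. g0 \<in> ?X}"
      by (simp add: image_image setcompr_eq_image)
    ultimately show ?thesis using False Suc.IH by (simp add: image_Un)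
  qed (auto simp: generator_index_def)
qed (simp add: generator_index_def)

context
  fixes f :: "nat \<times> 'g::wellorder \<Rightarrow> nat \<Rightarrow> ('g \<Rightarrow>\<^sub>0 'k::field)" and K :: "(nat \<times> 'g) set"
  assumes diag: "\<And>p. p \<in> K \<Longrightarrow> lookup (f p (fst p)) (snd p) \<noteq> 0"
    and below: "\<And>p j h. p \<in> K \<Longrightarrow> lookup (f p j) h \<noteq> 0 \<Longrightarrow> (j, h) \<le> p"
begin

lemma inj_on_triangular: "inj_on f K"
proof (rule inj_onI)
  fix p q assume pq: "p \<in> K" "q \<in> K" "f p = f q"
  have "lookup (f q (fst p)) (snd p) \<noteq> 0" using diag[OF pq(1)] pq(3) by simp
  hence "p \<le> q" using below[OF pq(2), of "fst p" "snd p"] by simp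
  moreover have "lookup (f p (fst q)) (snd q) \<noteq> 0" using diag[OF pq(2)] pq(3) by simp
  hence "q \<le> p" using below[OF pq(1), of "fst q" "snd q"] by simp
  ultimately show "p = q" by simp
qed

text \<open>Read off the coordinate q of the combination, for q the largest index with c q \<noteq> 0.\<close>

lemma triangular_combination_eq_zero:
  assumes P: "finite P" "P \<subseteq> K" and sum0: "(\<Sum>p\<in>P. tsmul (c p) (f p)) = 0"
  shows "\<forall>p\<in>P. c p = 0"
proof (rule ccontr)
  assume "\<not> (\<forall>p\<in>P. c p = 0)"
  hence Q: "finite {p \<in> P. c p \<noteq> 0}" "{p \<in> P. c p \<noteq> 0} \<noteq> {}" using P(1) by auto
  define q where "q = Max {p \<in> P. c p \<noteq> 0}"
  have q: "q \<in> {p \<in> P. c p \<noteq> 0}" "\<And>p. p \<in> P \<Longrightarrow> c p \<noteq> 0 \<Longrightarrow> p \<le> q"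
    using Max_in[OF Q] Max_ge[OF Q(1)] by (simp_all add: q_def)
  have "0 = lookup ((\<Sum>p\<in>P. tsmul (c p) (f p)) (fst q)) (snd q)" using sum0 by simp
  also have "\<dots> = (\<Sum>p\<in>P. c p * lookup (f p (fst q)) (snd q))"
    by (simp add: sum_fun_apply lookup_sum)
  also have "\<dots> = (\<Sum>p\<in>P. if p = q then c q * lookup (f q (fst q)) (snd q) else 0)"
  proof (rule sum.cong[OF refl])
    fix p assume p: "p \<in> P"
    have "c p * lookup (f p (fst q)) (snd q) = 0" if "p \<noteq> q"
    proof (cases "c p = 0")
      case False
      hence "p < q" using q(2)[OF p] that by simp
      thus ?thesis using below[of p "fst q" "snd q"] p P(2) by fastforce
    qed simp
    thus "c p * lookup (f p (fst q)) (snd q) = (if p = q then c q * lookup (f q (fst q)) (snd q) else 0)"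
      by simp
  qed
  also have "\<dots> = c q * lookup (f q (fst q)) (snd q)" using q(1) P(1) by simp
  finally show False using q(1) P(2) diag[of q] by auto
qed

lemma independent_triangular: "TP.independent (f ` K)"
  unfolding TP.independent_explicit_module
proof (intro allI impI)
  fix t u b assume t: "finite t" "t \<subseteq> f ` K" and sum0: "(\<Sum>b\<in>t. tsmul (u b) b) = 0" and "b \<in> t"
  obtain P where P: "P \<subseteq> K" "t = f ` P" using t(2) by (auto simp: subset_image_iff)
  have inj: "inj_on f P" using inj_on_subset[OF inj_on_triangular P(1)] .
  hence "finite P" using t(1) P(2) finite_image_iff by blast
  moreover have "(\<Sum>p\<in>P. tsmul (u (f p)) (f p)) = 0" using sum0 inj P(2) by (simp add: sum.reindex)
  ultimately have "\<forall>p\<in>P. u (f p) = 0" by (rule triangular_combination_eq_zero[OF _ P(1)])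
  thus "u b = 0" using \<open>b \<in> t\<close> P(2) by blast
qed

end

lemma independent_Bset:
  assumes "reduction_family T n"
  shows "TP.independent (Bset T n)"
  unfolding Bset_eq_image
proof (rule independent_triangular)
  fix p assume p: "p \<in> generator_index T n"
  hence i: "2 \<le> fst p" and family: "reduction_family T (fst p)"
    and g: "snd p \<in> red (rjoin (meet_fam T (fst p - 1)) (T (fst p)))"
    using reduction_family_mono[OF assms] by (auto simp: generator_index_def)
  show "lookup (svec T (fst p) (snd p) (fst p)) (snd p) \<noteq> 0"
    using svec_top[OF i family g] lookup_vvec_self[OF i family g] by simp
  show "(j, h) \<le> p" if "lookup (svec T (fst p) (snd p) j) h \<noteq> 0" for j h
  proof (cases "j = fst p")
    case True
    thus ?thesis using that svec_top[OF i family g] keys_vvec_le[OF i family g, of h]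
      by (cases p) (auto simp: in_keys_iff)
  next
    case False
    hence "j < fst p" using that svec_above[OF i family g, of j] by (cases "fst p < j") auto
    thus ?thesis by (cases p) auto
  qed
qed

lemma Bset_subset_syz:
  assumes "reduction_family T n"
  shows "Bset T n \<subseteq> syz T n"
  using svec_in_syz[OF _ reduction_family_mono[OF assms] _ assms]
  by (auto simp: Bset_eq_image generator_index_def)

lemma syz_reduce_by_generators:
  assumes m: "1 \<le> m" and family: "reduction_family T (Suc m)" and x: "x \<in> syz T (Suc m)"
  obtains z where "z \<in> TP.span (Bset T (Suc m))" "x - z \<in> syz T m"
proof
  interpret reduction_family T "Suc m" by (rule family)
  have i: "2 \<le> Suc m" using m by simp
  define G where "G = keys (x (Suc m)) \<inter> red (rjoin (meet_fam T m) (T (Suc m)))"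
  define z where "z = (\<Sum>g\<in>G. tsmul (lookup (x (Suc m)) g) (svec T (Suc m) g))"
  have g: "g \<in> red (rjoin (meet_fam T (Suc m - 1)) (T (Suc m)))" if "g \<in> G" for g
    using that by (simp add: G_def)
  have "svec T (Suc m) g \<in> Bset T (Suc m)" if "g \<in> G" for g
    unfolding Bset_eq_image using g[OF that] i
    by (intro image_eqI[where x = "(Suc m, g)"]) (auto simp: generator_index_def)
  thus "z \<in> TP.span (Bset T (Suc m))"
    unfolding z_def by (intro TP.span_sum TP.span_scale TP.span_base)
  have "z \<in> syz T (Suc m)" unfolding z_def
    by (intro TP.subspace_sum[OF subspace_syz] TP.subspace_scale[OF subspace_syz]
        svec_in_syz[OF i family g family order_refl])
  hence "x - z \<in> syz T (Suc m)" by (rule TP.subspace_diff[OF subspace_syz x])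
  moreover have "(x - z) (Suc m) = 0"
    using svec_combination_top[OF i family syz_top_in_kerR_join[OF i family x]]
    by (simp add: z_def G_def)
  ultimately show "x - z \<in> syz T m" by (rule syz_restrict)
qed

lemma syz_subset_span_Bset:
  assumes "1 \<le> n" "reduction_family T n"
  shows "syz T n \<subseteq> TP.span (Bset T n)"
  using assms
proof (induction n)
  case (Suc m)
  show ?case
  proof
    fix x assume x: "x \<in> syz T (Suc m)"
    show "x \<in> TP.span (Bset T (Suc m))"
    proof (cases "m = 0")
      case True
      have "x j = 0" for j
        using x True by (cases "j = 1") (auto simp: syz_def kerF_def piF_def)
      hence "x = 0" by (simp add: fun_eq_iff)
      thus ?thesis by (simp add: TP.span_zero)
    next
      case False
      hence m: "1 \<le> m" by simp
      obtain z where z: "z \<in> TP.span (Bset T (Suc m))" "x - z \<in> syz T m"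
        using syz_reduce_by_generators[OF m Suc.prems(2) x] .
      have "reduction_family T m" using reduction_family_mono[OF Suc.prems(2)] by simp
      hence "x - z \<in> TP.span (Bset T m)" using Suc.IH[OF m] z(2) by blast
      moreover have "Bset T m \<subseteq> Bset T (Suc m)" using False by simp
      ultimately have "(x - z) + z \<in> TP.span (Bset T (Suc m))"
        using TP.span_mono TP.span_add[OF _ z(1)] by blast
      thus ?thesis by simp
    qed
  qed
qed simp

theorem mainTheorem3:
  fixes T :: "nat \<Rightarrow> ('g::wellorder \<Rightarrow>\<^sub>0 'k::field) \<Rightarrow> ('g \<Rightarrow>\<^sub>0 'k)"
    and n :: nat
  assumes "n \<ge> 1"
    and "\<forall>j\<in>{1..n}. reduction_op (T j)"
  shows "module.independent tsmul (Bset T n) \<and> module.span tsmul (Bset T n) = syz T n"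
proof
  have family: "reduction_family T n"
    using assms(2) by (simp add: reduction_family_def reduction_op_iff)
  interpret reduction_family T n by (rule family)
  show "module.independent tsmul (Bset T n)"
    by (rule independent_Bset[OF family])
  show "module.span tsmul (Bset T n) = syz T n"
    using Bset_subset_syz[OF family] syz_subset_span_Bset[OF assms(1) family] subspace_syz
    by (rule TP.span_subspace)
qed

end
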